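(* Let $T = \prod_{n\in\omega} T_n \subseteq \omega^\omega$ where each $T_n \subseteq \omega$ has $|T_n| \leq n+1$. Then there exists a strictly increasing $g \in \omega^\omega$ such that for every strictly increasing $f \in T$: $f(n) < g(n)$ for all $n\in\omega$, and for all $m,n\in\omega$, whenever $g(n) \geq f(m)$ we have $g(n+1) > f(m+2)$. *)

theory Defs
  imports Main
begin

end

theory Submission
  imports Defs
begin

text \<open>Let \<open>M k\<close> be the largest element of \<open>T 0 \<union> \<dots> \<union> T k\<close>. Every \<open>f\<close> with
  \<open>f n \<in> T n\<close> satisfies \<open>f k \<le> M k\<close>, and if \<open>f\<close> is strictly increasing then \<open>m \<le> f m\<close>,
  so \<open>f m \<le> g n\<close> forces \<open>f (m + 2) \<le> M (g n + 2)\<close>. Hence it suffices to choose \<open>g\<close>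
  recursively with \<open>g (n + 1)\<close> exceeding \<open>g n\<close>, \<open>M (n + 1)\<close> and \<open>M (g n + 2)\<close>.\<close>

definition max_upto :: "(nat \<Rightarrow> nat set) \<Rightarrow> nat \<Rightarrow> nat" where
  "max_upto T k = Max (insert 0 (\<Union>j\<le>k. T j))"

lemma le_max_upto:
  assumes "\<And>n. finite (T n)" and "j \<le> k" and "x \<in> T j"
  shows "x \<le> max_upto T k"
  unfolding max_upto_def by (rule Max_ge) (use assms in auto)

primrec dominator :: "(nat \<Rightarrow> nat set) \<Rightarrow> nat \<Rightarrow> nat" where
  "dominator T 0 = Suc (max_upto T 0)"
| "dominator T (Suc n) =
     Suc (max (dominator T n) (max (max_upto T (Suc n)) (max_upto T (dominator T n + 2))))"

lemma strict_mono_dominator: "strict_mono (dominator T)"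
  by (simp add: strict_mono_Suc_iff less_Suc_eq_le)

lemma max_upto_less_dominator: "max_upto T n < dominator T n"
  by (cases n) auto

lemma max_upto_dominator_less_dominator_Suc:
  "max_upto T (dominator T n + 2) < dominator T (Suc n)"
  by simp

lemma less_dominator:
  assumes "\<And>n. finite (T n)" and "\<And>n. f n \<in> T n"
  shows "f n < dominator T n"
  using le_max_upto[OF assms(1) order_refl assms(2)] max_upto_less_dominator
  by (rule le_less_trans)

lemma dominator_Suc_greater:
  assumes "\<And>n. finite (T n)" and "\<And>n. f n \<in> T n" and "strict_mono f"
    and "f m \<le> dominator T n"
  shows "f (m + 2) < dominator T (Suc n)"
proof -
  have "m \<le> dominator T n"
    using strict_mono_imp_increasing[OF \<open>strict_mono f\<close>, of m] assms(4) by linarith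
  then have "f (m + 2) \<le> max_upto T (dominator T n + 2)"
    by (intro le_max_upto[OF assms(1) _ assms(2)]) simp
  then show ?thesis
    using max_upto_dominator_less_dominator_Suc by (rule le_less_trans)
qed

theorem lemma3p6:
  fixes T :: "nat \<Rightarrow> nat set"
  assumes "\<And>n. finite (T n)" and "\<And>n. card (T n) \<le> n + 1"
  shows "\<exists>g :: nat \<Rightarrow> nat. strict_mono g \<and>
           (\<forall>f :: nat \<Rightarrow> nat. strict_mono f \<and> (\<forall>n. f n \<in> T n) \<longrightarrow>
              (\<forall>n. f n < g n) \<and>
              (\<forall>m n. g n \<ge> f m \<longrightarrow> g (Suc n) > f (m + 2)))"
proof (intro exI conjI allI impI)
  show "strict_mono (dominator T)"
    by (rule strict_mono_dominator)
next
  fix f n assume "strict_mono f \<and> (\<forall>n. f n \<in> T n)"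
  then show "f n < dominator T n"
    using less_dominator[of T f n] assms(1) by blast
next
  fix f m n assume "strict_mono f \<and> (\<forall>n. f n \<in> T n)" and "f m \<le> dominator T n"
  then show "f (m + 2) < dominator T (Suc n)"
    using dominator_Suc_greater[of T f m n] assms(1) by blast
qed

end
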